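(* Let $k_1,k_2$ be positive integers with $1\le k_1\le k_2$ and let $p$ be an odd prime with $p\equiv 1\pmod{k_1+k_2}$. Let $M=[-k_1,k_2]^\ast$, viewed as a subset of the multiplicative group $\mathbb{Z}_p^\ast$. Then $M$ is a direct factor of $\mathbb{Z}_p^\ast$ if and only if $M$ is a direct factor of the subgroup $H=\langle -1,2,\dots,k_2\rangle$ of $\mathbb{Z}_p^\ast$.
   Context: $\mathbb{Z}_p^\ast=\mathbb{Z}_p\setminus\{0\}$ is the multiplicative group of nonzero residues modulo the prime $p$; $[a,b]^\ast=\{a,a+1,\dots,b\}\setminus\{0\}$. $\langle -1,2,\dots,k_2\rangle$ is the subgroup of $\mathbb{Z}_p^\ast$ generated by $-1,2,\dots,k_2$. For a (multiplicative) abelian group $G$ and a nonempty subset $A\subseteq G$, $A$ is a direct factor of $G$ if there is a subset $C\subseteq G$ such that every element $g\in G$ can be written uniquely as $g=ac$ with $a\in A$, $c\in C$ (a factorization $G=AC$). *)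

theory Defs
  imports "HOL-Number_Theory.Residues" "HOL-Algebra.Multiplicative_Group" "HOL-Algebra.Generated_Groups"
begin

definition Zp_star :: "nat \<Rightarrow> int monoid" where
  "Zp_star p = mult_of (residue_ring (int p))"

definition direct_factor :: "('a, 'b) monoid_scheme \<Rightarrow> 'a set \<Rightarrow> bool" where
  "direct_factor G A \<longleftrightarrow> A \<noteq> {} \<and> A \<subseteq> carrier G \<and>
     (\<exists>C \<subseteq> carrier G. \<forall>g \<in> carrier G. \<exists>!ac. fst ac \<in> A \<and> snd ac \<in> C \<and> g = fst ac \<otimes>\<^bsub>G\<^esub> snd ac)"

definition interval_star_mod :: "nat \<Rightarrow> int \<Rightarrow> int \<Rightarrow> int set" where
  "interval_star_mod p a b = (\<lambda>i. i mod int p) ` ({a..b} - {0})"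

definition H_sub :: "nat \<Rightarrow> nat \<Rightarrow> int monoid" where
  "H_sub p k2 = (Zp_star p)\<lparr>carrier := generate (Zp_star p) ((\<lambda>i. i mod int p) ` ({-1} \<union> {2..int k2}))\<rparr>"

end

theory Submission
  imports Defs
begin

text \<open>The set \<open>M = [-k1, k2]\<^sup>*\<close> already lies in \<open>H\<close>, because \<open>-i = (-1) \<cdot> i\<close>. For a subset \<open>A\<close> of a
  subgroup \<open>H \<le> G\<close>, being a direct factor of \<open>G\<close> and of \<open>H\<close> are equivalent: a complement \<open>C\<close> of \<open>A\<close>
  in \<open>G\<close> restricts to the complement \<open>C \<inter> H\<close> in \<open>H\<close>, and conversely a complement \<open>D\<close> in \<open>H\<close>
  extends to the complement \<open>D T\<close> in \<open>G\<close>, where \<open>T\<close> is a right transversal of \<open>H\<close>. The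
  congruence on \<open>p\<close> only serves to give \<open>k2 < p\<close>, so that the residues \<open>-1, 2, \<dots>, k2\<close> are
  nonzero.\<close>

definition factorization :: "('a, 'b) monoid_scheme \<Rightarrow> 'a set \<Rightarrow> 'a set \<Rightarrow> bool" where
  "factorization G A C \<longleftrightarrow> A \<subseteq> carrier G \<and> C \<subseteq> carrier G \<and>
     (\<forall>g \<in> carrier G. \<exists>a \<in> A. \<exists>c \<in> C. g = a \<otimes>\<^bsub>G\<^esub> c) \<and>
     (\<forall>a \<in> A. \<forall>c \<in> C. \<forall>a' \<in> A. \<forall>c' \<in> C. a \<otimes>\<^bsub>G\<^esub> c = a' \<otimes>\<^bsub>G\<^esub> c' \<longrightarrow> a = a' \<and> c = c')"

lemma (in monoid) direct_factor_iff_factorization: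
  "direct_factor G A \<longleftrightarrow> A \<noteq> {} \<and> (\<exists>C. factorization G A C)"
proof
  assume "direct_factor G A"
  then obtain C where A: "A \<noteq> {}" "A \<subseteq> carrier G" and C: "C \<subseteq> carrier G"
    and unique: "\<forall>g \<in> carrier G. \<exists>!ac. fst ac \<in> A \<and> snd ac \<in> C \<and> g = fst ac \<otimes> snd ac"
    unfolding direct_factor_def by blast
  have "a = a' \<and> c = c'"
    if "a \<in> A" "c \<in> C" "a' \<in> A" "c' \<in> C" "a \<otimes> c = a' \<otimes> c'" for a c a' c'
  proof -
    have "a \<otimes> c \<in> carrier G" using that A C by blast
    then obtain ac0 where
      "\<forall>ac. fst ac \<in> A \<and> snd ac \<in> C \<and> a \<otimes> c = fst ac \<otimes> snd ac \<longrightarrow> ac = ac0"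
      using unique by blast
    then have "(a, c) = ac0" "(a', c') = ac0" using that by simp_all
    then have "(a, c) = (a', c')" by (rule trans[OF _ sym])
    then show ?thesis by simp
  qed
  moreover have "\<exists>a \<in> A. \<exists>c \<in> C. g = a \<otimes> c" if g: "g \<in> carrier G" for g
  proof -
    obtain ac where "fst ac \<in> A" "snd ac \<in> C" "g = fst ac \<otimes> snd ac"
      using ex1_implies_ex[OF unique[rule_format, OF g]] by blast
    then show ?thesis by blast
  qed
  ultimately have "factorization G A C"
    using A C unfolding factorization_def by auto
  with A show "A \<noteq> {} \<and> (\<exists>C. factorization G A C)" by blast
next
  assume "A \<noteq> {} \<and> (\<exists>C. factorization G A C)"
  then obtain C where "A \<noteq> {}" and fact: "factorization G A C" by (elim conjE exE)
  have "\<exists>!ac. fst ac \<in> A \<and> snd ac \<in> C \<and> g = fst ac \<otimes> snd ac" if g: "g \<in> carrier G" for g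
  proof -
    obtain a c where "a \<in> A" "c \<in> C" "g = a \<otimes> c"
      using fact g unfolding factorization_def by blast
    moreover have "ac = (a, c)"
      if "fst ac \<in> A \<and> snd ac \<in> C \<and> g = fst ac \<otimes> snd ac" for ac
    proof -
      have "fst ac = a \<and> snd ac = c"
        using fact that \<open>a \<in> A\<close> \<open>c \<in> C\<close> \<open>g = a \<otimes> c\<close> unfolding factorization_def by blast
      then show ?thesis by (simp add: prod_eq_iff)
    qed
    ultimately show ?thesis by (intro ex1I[of _ "(a, c)"]) simp_all
  qed
  with \<open>A \<noteq> {}\<close> fact show "direct_factor G A"
    unfolding direct_factor_def factorization_def by blast
qed

lemma (in group) factorization_restrict_subgroup:
  assumes H: "subgroup H G" and "A \<subseteq> H" and fact: "factorization G A C"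
  shows "factorization (G\<lparr>carrier := H\<rparr>) A (C \<inter> H)"
proof -
  have "\<exists>a \<in> A. \<exists>c \<in> C \<inter> H. g = a \<otimes> c" if g: "g \<in> H" for g
  proof -
    have "g \<in> carrier G" using g subgroup.subset[OF H] by blast
    then obtain a c where ac: "a \<in> A" "c \<in> C" "g = a \<otimes> c"
      using fact unfolding factorization_def by blast
    have "a \<in> H" "a \<in> carrier G" "c \<in> carrier G"
      using ac \<open>A \<subseteq> H\<close> fact subgroup.subset[OF H] unfolding factorization_def by blast+
    then have "c = inv a \<otimes> g" using ac \<open>g \<in> carrier G\<close> by (simp add: inv_solve_left)
    then have "c \<in> H" using \<open>a \<in> H\<close> g H by (simp add: subgroup.m_closed subgroup.m_inv_closed)
    with ac show ?thesis by blast
  qed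
  with fact \<open>A \<subseteq> H\<close> show ?thesis unfolding factorization_def by auto
qed

lemma (in group) right_transversal_exists:
  assumes H: "subgroup H G"
  shows "\<exists>T. factorization G H T"
proof -
  define rep where "rep X = (SOME t. t \<in> X)" for X :: "'a set"
  define T where "T = (\<lambda>x. rep (H #> x)) ` carrier G"
  have rep_in: "rep (H #> x) \<in> H #> x" if "x \<in> carrier G" for x
    unfolding rep_def using rcos_self[OF that H] by (rule someI)
  have HG: "H \<subseteq> carrier G" using subgroup.subset[OF H] .
  have T_carrier: "T \<subseteq> carrier G"
    unfolding T_def using rep_in r_coset_subset_G[OF HG] by blast
  have coset_T: "H #> t = H #> x" if "x \<in> carrier G" "t = rep (H #> x)" for x t
    using repr_independence[OF rep_in[OF that(1)] that(1) H] that(2) by simp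
  have "\<exists>h \<in> H. \<exists>t \<in> T. g = h \<otimes> t" if g: "g \<in> carrier G" for g
  proof -
    have "g \<in> H #> rep (H #> g)"
      using coset_T[OF g refl] rcos_self[OF g H] by simp
    then obtain h where "h \<in> H" "g = h \<otimes> rep (H #> g)" unfolding r_coset_def by blast
    moreover have "rep (H #> g) \<in> T" unfolding T_def using g by blast
    ultimately show ?thesis by blast
  qed
  moreover have "h = h' \<and> t = t'"
    if hH: "h \<in> H" "h' \<in> H" and tT: "t \<in> T" "t' \<in> T" and eq: "h \<otimes> t = h' \<otimes> t'"
    for h t h' t'
  proof -
    obtain x x' where x: "x \<in> carrier G" "t = rep (H #> x)"
      and x': "x' \<in> carrier G" "t' = rep (H #> x')"
      using tT unfolding T_def by blast
    have tG: "t \<in> carrier G" "t' \<in> carrier G" using tT T_carrier by blast+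
    have "H #> t = H #> (h \<otimes> t)"
      using repr_independence[OF rcosI[OF hH(1) HG tG(1)] tG(1) H] .
    also have "\<dots> = H #> t'"
      using repr_independence[OF rcosI[OF hH(2) HG tG(2)] tG(2) H] eq by simp
    finally have "t = t'" using coset_T[OF x] coset_T[OF x'] x(2) x'(2) by simp
    moreover have "h \<in> carrier G" "h' \<in> carrier G" using hH HG by blast+
    ultimately show ?thesis using eq tG by simp
  qed
  ultimately show ?thesis using HG T_carrier unfolding factorization_def by blast
qed

lemma (in group) factorization_compose:
  assumes H: "subgroup H G"
    and fact_H: "factorization (G\<lparr>carrier := H\<rparr>) A D" and fact_G: "factorization G H T"
  shows "factorization G A (D <#> T)"
proof -
  have HG: "H \<subseteq> carrier G" using subgroup.subset[OF H] .
  have A: "A \<subseteq> H" and D: "D \<subseteq> H" and T: "T \<subseteq> carrier G"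
    using fact_H fact_G unfolding factorization_def by auto
  have DT: "D <#> T \<subseteq> carrier G"
    using D T HG unfolding set_mult_def by auto
  have "\<exists>a \<in> A. \<exists>c \<in> D <#> T. g = a \<otimes> c" if g: "g \<in> carrier G" for g
  proof -
    obtain h t where h: "h \<in> H" and "t \<in> T" and "g = h \<otimes> t"
      using fact_G g unfolding factorization_def by blast
    moreover obtain a d where "a \<in> A" "d \<in> D" "h = a \<otimes> d"
      using fact_H h unfolding factorization_def by auto
    moreover have "a \<in> carrier G" "d \<in> carrier G" "t \<in> carrier G"
      using calculation A D T HG by blast+
    ultimately have "g = a \<otimes> (d \<otimes> t)" "d \<otimes> t \<in> D <#> T"
      by (auto simp: m_assoc set_mult_def)
    with \<open>a \<in> A\<close> show ?thesis by blast
  qed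
  moreover have "a = a' \<and> c = c'"
    if a: "a \<in> A" "a' \<in> A" and c: "c \<in> D <#> T" "c' \<in> D <#> T" and eq: "a \<otimes> c = a' \<otimes> c'"
    for a c a' c'
  proof -
    obtain d t d' t' where dt: "d \<in> D" "t \<in> T" "c = d \<otimes> t" and dt': "d' \<in> D" "t' \<in> T" "c' = d' \<otimes> t'"
      using c unfolding set_mult_def by blast
    have G: "a \<in> carrier G" "a' \<in> carrier G" "d \<in> carrier G" "d' \<in> carrier G"
        "t \<in> carrier G" "t' \<in> carrier G"
      using a dt dt' A D T HG by blast+
    have "a \<otimes> d \<in> H" "a' \<otimes> d' \<in> H"
      using a dt dt' A D subgroup.m_closed[OF H] by blast+
    moreover have "(a \<otimes> d) \<otimes> t = (a' \<otimes> d') \<otimes> t'"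
      using eq dt dt' G by (simp add: m_assoc)
    ultimately have "a \<otimes> d = a' \<otimes> d'" "t = t'"
      using fact_G dt(2) dt'(2) unfolding factorization_def by blast+
    then have "a = a' \<and> d = d'"
      using fact_H a dt(1) dt'(1) unfolding factorization_def by simp
    with dt dt' \<open>t = t'\<close> show ?thesis by simp
  qed
  ultimately show ?thesis
    using A HG DT unfolding factorization_def by blast
qed

lemma (in group) direct_factor_subgroup_iff:
  assumes H: "subgroup H G" and "A \<subseteq> H"
  shows "direct_factor G A \<longleftrightarrow> direct_factor (G\<lparr>carrier := H\<rparr>) A"
proof -
  interpret H: group "G\<lparr>carrier := H\<rparr>" using subgroup_imp_group[OF H] .
  obtain T where "factorization G H T" using right_transversal_exists[OF H] by blast
  then show ?thesis
    using factorization_compose[OF H] factorization_restrict_subgroup[OF H \<open>A \<subseteq> H\<close>]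
    unfolding direct_factor_iff_factorization H.direct_factor_iff_factorization by blast
qed

lemma group_Zp_star: "prime p \<Longrightarrow> group (Zp_star p)"
  unfolding Zp_star_def
  by (intro field.field_mult_group residues_prime.is_field) (simp add: residues_prime_def)

lemma carrier_Zp_star: "carrier (Zp_star p) = {1..int p - 1}"
  unfolding Zp_star_def residue_ring_def by auto

lemma mult_Zp_star: "x \<otimes>\<^bsub>Zp_star p\<^esub> y = x * y mod int p"
  unfolding Zp_star_def residue_ring_def mult_of_def by simp

lemma mod_in_carrier_Zp_star:
  assumes "i \<noteq> 0" and "\<bar>i\<bar> < int p"
  shows "i mod int p \<in> carrier (Zp_star p)"
proof -
  have "\<not> int p dvd i" using dvd_imp_le_int[of i "int p"] assms by auto
  then have "i mod int p \<noteq> 0" by (simp add: mod_eq_0_iff_dvd)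
  moreover have "0 \<le> i mod int p" "i mod int p < int p" using assms(2) by simp_all
  ultimately show ?thesis unfolding carrier_Zp_star by simp
qed

lemma interval_star_mod_subset_generate:
  assumes "k1 \<le> k2" and "k2 < p"
  shows "interval_star_mod p (- int k1) (int k2)
    \<subseteq> generate (Zp_star p) ((\<lambda>i. i mod int p) ` ({-1} \<union> {2..int k2}))"
    (is "_ \<subseteq> generate ?G ?S")
proof
  fix y assume "y \<in> interval_star_mod p (- int k1) (int k2)"
  then obtain i where "i \<in> {- int k1..int k2} - {0}" and y: "y = i mod int p"
    unfolding interval_star_mod_def by blast
  then have i: "- int k1 \<le> i" "i \<le> int k2" "i \<noteq> 0" by auto
  consider "i = 1" | "i = -1 \<or> 2 \<le> i" | "i \<le> -2" using i(3) by linarith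
  then show "y \<in> generate ?G ?S"
  proof cases
    case 1
    then have "y = \<one>\<^bsub>?G\<^esub>" using y i assms by (simp add: Zp_star_def residue_ring_def)
    then show ?thesis by (simp add: generate.one)
  next
    case 2
    then show ?thesis using y i by (intro generate.incl) auto
  next
    case 3
    have "(-1) mod int p \<in> generate ?G ?S" "(-i) mod int p \<in> generate ?G ?S"
      using 3 i assms by (auto intro: generate.incl)
    moreover have "y = ((-1) mod int p) \<otimes>\<^bsub>?G\<^esub> ((-i) mod int p)"
      unfolding mult_Zp_star y by (simp add: mod_mult_eq)
    ultimately show ?thesis using generate.eng by metis
  qed
qed

lemma cong_one_imp_less:
  fixes p n :: nat
  assumes "[p = 1] (mod n)" and "1 < p"
  shows "n < p"
proof -
  have "n dvd p - 1" using assms by (simp add: cong_altdef_nat)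
  then show ?thesis using assms(2) by (auto dest: dvd_imp_le)
qed

theorem theorem4p1:
  fixes k1 k2 p :: nat
  assumes "1 \<le> k1" and "k1 \<le> k2"
    and "prime p" and "odd p"
    and "[p = 1] (mod (k1 + k2))"
  shows "direct_factor (Zp_star p) (interval_star_mod p (- int k1) (int k2))
     \<longleftrightarrow> direct_factor (H_sub p k2) (interval_star_mod p (- int k1) (int k2))"
proof -
  interpret group "Zp_star p" using group_Zp_star[OF assms(3)] .
  have "k1 + k2 < p" using cong_one_imp_less[OF assms(5)] prime_gt_1_nat[OF assms(3)] .
  define S where "S = (\<lambda>i. i mod int p) ` ({-1} \<union> {2..int k2})"
  have "S \<subseteq> carrier (Zp_star p)"
    unfolding S_def using \<open>k1 + k2 < p\<close> assms(1) by (intro image_subsetI mod_in_carrier_Zp_star) auto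
  then have "subgroup (generate (Zp_star p) S) (Zp_star p)" by (rule generate_is_subgroup)
  moreover have "interval_star_mod p (- int k1) (int k2) \<subseteq> generate (Zp_star p) S"
    unfolding S_def using interval_star_mod_subset_generate assms(2) \<open>k1 + k2 < p\<close> by simp
  ultimately show ?thesis
    unfolding H_sub_def S_def[symmetric] by (rule direct_factor_subgroup_iff)
qed

end
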